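(* Let $(S_n)_{n\ge0}$ be defined by $S_0=3$, $S_1=1$, $S_2=3$ and $S_{n+1}=S_n+S_{n-1}+S_{n-2}$ for $n\ge 2$. Let $\alpha,\beta,\gamma$ be the roots of $x^3-x^2-x-1=0$ and $C_n=\alpha^n\beta^n+\alpha^n\gamma^n+\beta^n\gamma^n$ for $n\ge0$. Then for all integers $n\ge 0$ and $m\ge 2$, $$S_nS_{nm}=S_{n(m+1)}+S_{n(m-1)}C_n-S_{n(m-2)}.$$
   Context: $S_n$ is the generalized Lucas (generalized Tribonacci) sequence. *)

theory Defs
  imports Complex_Main
begin

fun S :: "nat \<Rightarrow> int" where
  "S 0 = 3"
| "S (Suc 0) = 1"
| "S (Suc (Suc 0)) = 3"
| "S (Suc (Suc (Suc n))) = S (Suc (Suc n)) + S (Suc n) + S n"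

end

theory Submission
  imports Defs
begin

text \<open>By induction along the recurrence, \<open>S k = \<alpha>^k + \<beta>^k + \<gamma>^k\<close>. Put \<open>a = \<alpha>^n\<close>,
  \<open>b = \<beta>^n\<close>, \<open>c = \<gamma>^n\<close>: then \<open>S (n*j)\<close> is the \<open>j\<close>-th power sum of \<open>a, b, c\<close>, whose
  elementary symmetric functions are \<open>S n\<close>, \<open>C n\<close> and \<open>(\<alpha>\<beta>\<gamma>)^n = 1\<close>. The claimed
  identity is Newton's recurrence for these power sums.\<close>

lemma vieta_cubic:
  fixes a b c p q r :: "'a::field_char_0"
  assumes factored: "\<And>x. x^3 + p*x^2 + q*x + r = (x - a) * (x - b) * (x - c)"
  shows "a + b + c = - p" and "a*b + a*c + b*c = q" and "a*b*c = - r"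
proof -
  have at_0: "a*b*c = - r"
    using factored[of 0] by simp
  have at_1: "p + q + (a + b + c) - (a*b + a*c + b*c) = 0"
    using factored[of 1] at_0 by (simp add: algebra_simps)
  have at_minus_1: "p - q + (a + b + c) + (a*b + a*c + b*c) = 0"
    using factored[of "-1"] at_0 by (simp add: algebra_simps)
  have "2 * (a + b + c + p) = (p + q + (a + b + c) - (a*b + a*c + b*c))
      + (p - q + (a + b + c) + (a*b + a*c + b*c))"
    by algebra
  then have "2 * (a + b + c + p) = 0"
    unfolding at_1 at_minus_1 by simp
  then show sum_roots: "a + b + c = - p"
    by (simp add: eq_neg_iff_add_eq_0 del: distrib_left_numeral)
  show "a*b + a*c + b*c = q"
    using at_1 unfolding sum_roots by simp
  show "a*b*c = - r"
    by (fact at_0)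
qed

lemma S_eq_power_sum:
  fixes \<alpha> \<beta> \<gamma> :: "'a::field_char_0"
  assumes factored: "\<And>x. x^3 - x^2 - x - 1 = (x - \<alpha>) * (x - \<beta>) * (x - \<gamma>)"
  shows "of_int (S k) = \<alpha>^k + \<beta>^k + \<gamma>^k"
proof -
  have factored': "x^3 + (-1)*x^2 + (-1)*x + (-1) = (x - \<alpha>) * (x - \<beta>) * (x - \<gamma>)" for x
    using factored[of x] by simp
  note vieta = vieta_cubic[OF factored']
  have root_rec: "x^(k + 3) = x^(k + 2) + x^(k + 1) + x^k" if "x \<in> {\<alpha>, \<beta>, \<gamma>}" for x k
  proof -
    have "x^3 = x^2 + x + 1"
      using factored[of x] that by (auto simp: algebra_simps)
    then show ?thesis
      by (metis distrib_left mult.right_neutral power_add power_one_right)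
  qed
  show ?thesis
  proof (induction k rule: S.induct)
    case 3
    have "\<alpha>^2 + \<beta>^2 + \<gamma>^2 = (\<alpha> + \<beta> + \<gamma>)^2 - 2 * (\<alpha>*\<beta> + \<alpha>*\<gamma> + \<beta>*\<gamma>)"
      by (simp add: power2_eq_square algebra_simps)
    then show ?case
      using vieta by (simp add: numeral_2_eq_2)
  next
    case (4 k)
    then show ?case
      using root_rec[of _ k] by (simp add: eval_nat_numeral algebra_simps)
  qed (use vieta in simp_all)
qed

lemma power_sum_newton_step:
  fixes a b c :: "'a::comm_ring_1"
  shows "(a + b + c) * (a^(k + 2) + b^(k + 2) + c^(k + 2)) =
           (a^(k + 3) + b^(k + 3) + c^(k + 3))
         + (a^(k + 1) + b^(k + 1) + c^(k + 1)) * (a*b + a*c + b*c)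
         - (a^k + b^k + c^k) * (a*b*c)"
  by (simp add: algebra_simps power_add power2_eq_square power3_eq_cube)

theorem mainTheorem6:
  fixes \<alpha> \<beta> \<gamma> :: complex and n m :: nat
  assumes roots: "\<And>x::complex. x^3 - x^2 - x - 1 = (x - \<alpha>) * (x - \<beta>) * (x - \<gamma>)"
    and m2: "m \<ge> 2"
  shows "of_int (S n) * of_int (S (n * m)) =
           of_int (S (n * (m + 1)))
         + of_int (S (n * (m - 1))) * (\<alpha>^n * \<beta>^n + \<alpha>^n * \<gamma>^n + \<beta>^n * \<gamma>^n)
         - of_int (S (n * (m - 2)))"
proof -
  obtain k where m: "m = k + 2"
    using m2 le_Suc_ex by (metis add.commute)
  have product_one: "\<alpha>^n * \<beta>^n * \<gamma>^n = 1"
    using roots[of 0] by (simp flip: power_mult_distrib)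
  have S_multiple: "of_int (S (n * j)) = (\<alpha>^n)^j + (\<beta>^n)^j + (\<gamma>^n)^j" for j
    by (simp add: S_eq_power_sum[OF roots] flip: power_mult)
  have indices: "n * (m + 1) = n * (k + 3)" "n * m = n * (k + 2)"
    "n * (m - 1) = n * (k + 1)" "n * (m - 2) = n * k"
    using m by (simp_all add: algebra_simps)
  show ?thesis
    unfolding indices S_multiple S_multiple[of 1, simplified]
    using power_sum_newton_step[of "\<alpha>^n" "\<beta>^n" "\<gamma>^n" k] product_one by simp
qed

end
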